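(* Let $X$ be a compact Hausdorff space and $f:\mathbb N\to X$ a map with finite range. For $m\ge1$ let $R_m(f)=\{(f(lm),f(lm+1),\ldots,f(lm+m-1)):l\in\mathbb N\}$. Then the limit $\lim_{m\to\infty}\frac{\log|R_m(f)|}{m}$ exists and equals the anqie entropy of $f$.
   Context: $\mathbb N=\{0,1,2,\ldots\}$. For a compact Hausdorff space $X$ and a map $f:\mathbb N\to X$, let $X_f$ be the closure in $X^{\mathbb N}$ (product topology) of $\{(f(n),f(n+1),f(n+2),\ldots):n\in\mathbb N\}$, and let $B_f$ be the shift $(\omega_0,\omega_1,\ldots)\mapsto(\omega_1,\omega_2,\ldots)$ restricted to $X_f$. The anqie entropy of $f$ is the topological entropy $h(B_f)$. $|C|$ is the cardinality of a finite set $C$. *)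

theory Defs
  imports "HOL-Analysis.Analysis"
begin

definition open_covers :: "'a topology \<Rightarrow> 'a set set set" where
  "open_covers T = {U. (\<forall>u\<in>U. openin T u) \<and> \<Union>U = topspace T}"

definition cover_number :: "'a topology \<Rightarrow> 'a set set \<Rightarrow> nat" where
  "cover_number T U = Inf {card W | W. W \<subseteq> U \<and> finite W \<and> \<Union>W = topspace T}"

definition join_cover :: "'a topology \<Rightarrow> ('a \<Rightarrow> 'a) \<Rightarrow> 'a set set \<Rightarrow> nat \<Rightarrow> 'a set set" where
  "join_cover T g U n =
     {topspace T \<inter> (\<Inter>i<n. (g ^^ i) -` c i) | c. \<forall>i<n. c i \<in> U}"

definition entropy_cover :: "'a topology \<Rightarrow> ('a \<Rightarrow> 'a) \<Rightarrow> 'a set set \<Rightarrow> real" where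
  "entropy_cover T g U =
     lim (\<lambda>n. ln (real (cover_number T (join_cover T g U n))) / real n)"

definition top_entropy :: "'a topology \<Rightarrow> ('a \<Rightarrow> 'a) \<Rightarrow> ereal" where
  "top_entropy T g = (SUP U \<in> open_covers T. ereal (entropy_cover T g U))"

definition Xf_top :: "'a topology \<Rightarrow> (nat \<Rightarrow> 'a) \<Rightarrow> (nat \<Rightarrow> 'a) topology" where
  "Xf_top X f = subtopology (product_topology (\<lambda>_. X) UNIV)
     ((product_topology (\<lambda>_. X) UNIV) closure_of {(\<lambda>k. f (n + k)) | n. True})"

definition shift :: "(nat \<Rightarrow> 'a) \<Rightarrow> (nat \<Rightarrow> 'a)" where
  "shift \<omega> = (\<lambda>k. \<omega> (Suc k))"

definition anqie_entropy :: "'a topology \<Rightarrow> (nat \<Rightarrow> 'a) \<Rightarrow> ereal" where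
  "anqie_entropy X f = top_entropy (Xf_top X f) shift"

definition R_blocks :: "(nat \<Rightarrow> 'a) \<Rightarrow> nat \<Rightarrow> 'a list set" where
  "R_blocks f m = {map (\<lambda>i. f (l * m + i)) [0..<m] | l. True}"

end

theory Submission
  imports Defs
begin

text \<open>Since f takes finitely many values, every point of the orbit closure X_f is a
  sequence over range f whose finite words all occur in f, and cylinders (sets of points
  with prescribed initial symbols) are open in X_f. The word complexity p(n) of f thus
  controls every open cover: the n-th join of the cover by 1-cylinders needs p(n)
  members, while by compactness any open cover is refined by the k-cylinders for some k,
  so its n-th join needs at most p(n + k) members. Hence h(B_f) = lim ln p(n) / n, which
  exists by Fekete's lemma because p is submultiplicative. Finally R_m consists of words
  of f, and a word of length n can be read off n div k + 2 consecutive aligned blocks of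
  length k, so p(n) \<le> k |R_k|^(n div k + 2); together these squeeze ln |R_m| / m to the
  same limit.\<close>

section \<open>Fekete's lemma\<close>

lemma subadditive_mult_le:
  fixes a :: "nat \<Rightarrow> real"
  assumes "\<And>m n. a (m + n) \<le> a m + a n"
  shows "a (q * k + r) \<le> real q * a k + a r"
proof (induction q)
  case (Suc q)
  have "a (Suc q * k + r) = a (k + (q * k + r))" by (simp add: algebra_simps)
  also have "\<dots> \<le> a k + a (q * k + r)" by (rule assms)
  finally show ?case using Suc by (simp add: algebra_simps)
qed simp

lemma subadditive_eventually_less:
  fixes a :: "nat \<Rightarrow> real"
  assumes sub: "\<And>m n. a (m + n) \<le> a m + a n" and nonneg: "\<And>n. 0 \<le> a n"
    and k: "k \<ge> 1" "a k / real k < y"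
  shows "\<forall>\<^sub>F n in sequentially. a n / real n < y"
proof -
  define M where "M = (\<Sum>r<k. a r)"
  have M: "a r \<le> M" if "r < k" for r
    unfolding M_def using that nonneg by (intro member_le_sum) auto
  have gap: "0 < y - a k / real k" using k by simp
  obtain N :: nat where N: "M / (y - a k / real k) < real N"
    using reals_Archimedean2 by blast
  show ?thesis
    using eventually_ge_at_top[of "max 1 N"]
  proof eventually_elim
    case (elim n)
    then have n: "real n \<ge> 1" "real N \<le> real n" by auto
    have "a n \<le> real (n div k) * a k + M"
      using subadditive_mult_le[OF sub, of "n div k" k "n mod k"] M[of "n mod k"] k
      by (simp add: mult.commute)
    also have "\<dots> \<le> real n / real k * a k + M"
      using nonneg[of k] of_nat_div_le_of_nat[of n k] by (intro add_right_mono mult_right_mono) auto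
    also have "\<dots> < real n * y"
    proof -
      have "M < (y - a k / real k) * real N"
        using N gap by (simp add: field_simps)
      also have "\<dots> \<le> (y - a k / real k) * real n"
        using gap n by simp
      finally show ?thesis using k by (simp add: field_simps)
    qed
    finally show ?case using n by (simp add: field_simps)
  qed
qed

lemma fekete_subadditive:
  fixes a :: "nat \<Rightarrow> real"
  assumes sub: "\<And>m n. a (m + n) \<le> a m + a n" and nonneg: "\<And>n. 0 \<le> a n"
  shows "(\<lambda>n. a n / real n) \<longlonglongrightarrow> (INF n\<in>{1..}. a n / real n)"
proof (rule order_tendstoI)
  have bdd: "bdd_below ((\<lambda>n. a n / real n) ` {1..})"
    by (rule bdd_belowI[of _ 0]) (auto simp: nonneg)
  fix y
  show "\<forall>\<^sub>F n in sequentially. y < a n / real n" if "y < (INF n\<in>{1..}. a n / real n)"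
    using eventually_ge_at_top[of 1]
  proof eventually_elim
    case (elim n)
    then show ?case using that bdd by (auto intro: less_le_trans cINF_lower)
  qed
  show "\<forall>\<^sub>F n in sequentially. a n / real n < y" if less: "(INF n\<in>{1..}. a n / real n) < y"
  proof -
    obtain k where "k \<ge> 1" "a k / real k < y"
      using less bdd by (auto simp: cINF_less_iff)
    then show ?thesis by (rule subadditive_eventually_less[OF sub nonneg])
  qed
qed

lemma submultiplicative_ln_limit:
  fixes a :: "nat \<Rightarrow> nat"
  assumes sub: "\<And>m n. a (m + n) \<le> a m * a n" and pos: "\<And>n. a n \<ge> 1"
  shows "(\<lambda>n. ln (real (a n)) / real n) \<longlonglongrightarrow> (INF n\<in>{1..}. ln (real (a n)) / real n)"
proof (rule fekete_subadditive)
  fix m n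
  have "real (a (m + n)) \<le> real (a m) * real (a n)"
    using sub[of m n] by (metis of_nat_le_iff of_nat_mult)
  then have "ln (real (a (m + n))) \<le> ln (real (a m) * real (a n))"
    using pos[of "m + n"] by simp
  also have "\<dots> = ln (real (a m)) + ln (real (a n))"
    using pos[of m] pos[of n] by (simp add: ln_mult)
  finally show "ln (real (a (m + n))) \<le> ln (real (a m)) + ln (real (a n))" .
qed (use pos in simp)

lemma LIMSEQ_shift_over_n:
  fixes a :: "nat \<Rightarrow> real"
  assumes "(\<lambda>n. a n / real n) \<longlonglongrightarrow> L"
  shows "(\<lambda>n. a (n + k) / real n) \<longlonglongrightarrow> L"
proof -
  have "(\<lambda>n. a (n + k) / real (n + k) * (1 + real k / real n)) \<longlonglongrightarrow> L * (1 + 0)"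
    using LIMSEQ_ignore_initial_segment[OF assms, of k]
    by (intro tendsto_intros) simp_all
  moreover have "a (n + k) / real (n + k) * (1 + real k / real n) = a (n + k) / real n"
    if "n \<ge> 1" for n
  proof -
    have "1 + real k / real n = real (n + k) / real n" using that by (simp add: field_simps)
    then show ?thesis using that by simp
  qed
  ultimately show ?thesis
    by (auto intro: Lim_transform_eventually eventually_sequentiallyI)
qed

section \<open>Words of a sequence\<close>

definition factors :: "(nat \<Rightarrow> 'a) \<Rightarrow> nat \<Rightarrow> 'a list set" where
  "factors f n = {map (\<lambda>i. f (p + i)) [0..<n] | p. True}"

lemma finite_factors: "finite (range f) \<Longrightarrow> finite (factors f n)"
  by (rule finite_subset[OF _ finite_lists_length_eq[of "range f" n]]) (auto simp: factors_def)

lemma card_factors_pos: "finite (range f) \<Longrightarrow> card (factors f n) \<ge> 1"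
  using finite_factors[of f n] by (auto simp: Suc_le_eq card_gt_0_iff factors_def)

lemma map_upt_add: "map g [0..<m + n] = map g [0..<m] @ map (\<lambda>i. g (m + i)) [0..<n]"
  by (induction n) auto

lemma card_factors_add_le:
  assumes "finite (range f)"
  shows "card (factors f (m + n)) \<le> card (factors f m) * card (factors f n)"
proof -
  have "factors f (m + n) \<subseteq> (\<lambda>(u, v). u @ v) ` (factors f m \<times> factors f n)"
  proof
    fix w assume "w \<in> factors f (m + n)"
    then obtain p where w: "w = map (\<lambda>i. f (p + i)) [0..<m + n]"
      unfolding factors_def by auto
    have "w = map (\<lambda>i. f (p + i)) [0..<m] @ map (\<lambda>i. f ((p + m) + i)) [0..<n]"
      unfolding w map_upt_add by (simp add: add.assoc)
    then show "w \<in> (\<lambda>(u, v). u @ v) ` (factors f m \<times> factors f n)"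
      unfolding factors_def by blast
  qed
  then have "card (factors f (m + n)) \<le> card (factors f m \<times> factors f n)"
    using assms by (meson card_image_le card_mono finite_SigmaI finite_factors finite_imageI order_trans)
  then show ?thesis by (simp add: card_cartesian_product)
qed

definition word_entropy :: "(nat \<Rightarrow> 'a) \<Rightarrow> real" where
  "word_entropy f = (INF n\<in>{1..}. ln (real (card (factors f n))) / real n)"

lemma word_entropy_limit:
  "finite (range f) \<Longrightarrow>
    (\<lambda>n. ln (real (card (factors f n))) / real n) \<longlonglongrightarrow> word_entropy f"
  unfolding word_entropy_def
  by (rule submultiplicative_ln_limit) (use card_factors_add_le card_factors_pos in auto)

lemma R_blocks_subset_factors: "R_blocks f k \<subseteq> factors f k"
  unfolding R_blocks_def factors_def by auto

lemma card_R_blocks_pos: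
  assumes "finite (range f)"
  shows "card (R_blocks f k) \<ge> 1"
proof -
  have "finite (R_blocks f k)"
    using finite_subset[OF R_blocks_subset_factors finite_factors[OF assms]] .
  then show ?thesis by (auto simp: Suc_le_eq card_gt_0_iff R_blocks_def)
qed

lemma concat_map_blocks:
  "concat (map (\<lambda>j. map (\<lambda>i. g (j * k + i)) [0..<k]) [0..<q]) = map g [0..<q * k]"
proof (induction q)
  case (Suc q)
  have "map g [0..<Suc q * k] = map g [0..<q * k] @ map (\<lambda>i. g (q * k + i)) [0..<k]"
    by (metis map_upt_add add.commute mult_Suc)
  then show ?case using Suc by simp
qed simp

lemma take_drop_map_upt:
  "n + r \<le> N \<Longrightarrow> take n (drop r (map g [0..<N])) = map (\<lambda>i. g (r + i)) [0..<n]"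
  by (auto simp: drop_map take_map intro!: nth_equalityI)

text \<open>A factor of length n starting at p = l k + r is read off, from offset r, the
  concatenation of the n div k + 2 aligned blocks starting at block l.\<close>
lemma card_factors_le_R_blocks:
  assumes fin: "finite (range f)" and k: "k \<ge> 1"
  shows "card (factors f n) \<le> k * card (R_blocks f k) ^ (n div k + 2)"
proof -
  define q where "q = n div k + 2"
  define Bs where "Bs = {bs. set bs \<subseteq> R_blocks f k \<and> length bs = q}"
  define decode :: "nat \<times> 'a list list \<Rightarrow> 'a list"
    where "decode = (\<lambda>(r, bs). take n (drop r (concat bs)))"
  have "factors f n \<subseteq> decode ` ({..<k} \<times> Bs)"
  proof
    fix w assume "w \<in> factors f n"
    then obtain p where w: "w = map (\<lambda>i. f (p + i)) [0..<n]" unfolding factors_def by auto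
    define l r where "l = p div k" and "r = p mod k"
    have r: "r < k" unfolding r_def using k by simp
    define bs where "bs = map (\<lambda>j. map (\<lambda>i. f ((l + j) * k + i)) [0..<k]) [0..<q]"
    have "bs \<in> Bs" unfolding Bs_def bs_def R_blocks_def by auto
    have "concat bs = map (\<lambda>i. f (l * k + i)) [0..<q * k]"
      unfolding bs_def using concat_map_blocks[of "\<lambda>i. f (l * k + i)" k q]
      by (simp add: algebra_simps)
    moreover have "n + r \<le> q * k"
    proof -
      have "n mod k < k" using k by simp
      then show ?thesis using r div_mult_mod_eq[of n k] unfolding q_def add_mult_distrib by linarith
    qed
    ultimately have "decode (r, bs) = map (\<lambda>i. f (l * k + (r + i))) [0..<n]"
      unfolding decode_def by (simp add: take_drop_map_upt)
    also have "\<dots> = w" unfolding w l_def r_def by (simp add: add.assoc)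
    finally show "w \<in> decode ` ({..<k} \<times> Bs)" using r \<open>bs \<in> Bs\<close> by force
  qed
  moreover have "finite Bs"
    unfolding Bs_def using finite_subset[OF R_blocks_subset_factors finite_factors[OF fin]]
    by (rule finite_lists_length_eq)
  ultimately have "card (factors f n) \<le> card ({..<k} \<times> Bs)"
    by (meson card_image_le card_mono finite_SigmaI finite_imageI finite_lessThan order_trans)
  also have "\<dots> = k * card (R_blocks f k) ^ q"
    using finite_subset[OF R_blocks_subset_factors finite_factors[OF fin]]
    by (simp add: card_cartesian_product Bs_def card_lists_length_eq)
  finally show ?thesis unfolding q_def .
qed

lemma word_entropy_le_R_blocks:
  assumes fin: "finite (range f)" and k: "k \<ge> 1"
  shows "word_entropy f \<le> ln (real (card (R_blocks f k))) / real k"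
proof -
  define C where "C = ln (real (card (R_blocks f k)))"
  have C: "C \<ge> 0" and R: "real (card (R_blocks f k)) \<ge> 1"
    unfolding C_def using card_R_blocks_pos[OF fin, of k] by simp_all
  have bound: "ln (real (card (factors f n))) / real n \<le> C / real k + (ln (real k) + 2 * C) / real n"
    if n: "n \<ge> 1" for n
  proof -
    have "real (card (factors f n)) \<le> real k * real (card (R_blocks f k)) ^ (n div k + 2)"
      using card_factors_le_R_blocks[OF fin k, of n] by (metis of_nat_le_iff of_nat_mult of_nat_power)
    then have "ln (real (card (factors f n))) \<le> ln (real k * real (card (R_blocks f k)) ^ (n div k + 2))"
      using card_factors_pos[OF fin, of n] by simp
    also have "\<dots> = ln (real k) + real (n div k + 2) * C"
      using k R unfolding C_def by (simp add: ln_mult ln_realpow algebra_simps)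
    also have "\<dots> \<le> ln (real k) + (real n / real k + 2) * C"
      using C of_nat_div_le_of_nat[of n k] by (intro add_left_mono mult_right_mono) auto
    finally show ?thesis using n k by (simp add: divide_right_mono field_simps)
  qed
  have "(\<lambda>n. C / real k + (ln (real k) + 2 * C) / real n) \<longlonglongrightarrow> C / real k"
    using tendsto_add[OF tendsto_const lim_const_over_n] by simp
  then show ?thesis unfolding C_def[symmetric]
    using bound by (intro tendsto_le[OF _ _ word_entropy_limit[OF fin]]) (auto intro: eventually_sequentiallyI)
qed

lemma R_blocks_limit:
  assumes fin: "finite (range f)"
  shows "(\<lambda>m. ln (real (card (R_blocks f m))) / real m) \<longlonglongrightarrow> word_entropy f"
proof (rule tendsto_sandwich[OF _ _ tendsto_const word_entropy_limit[OF fin]])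
  show "\<forall>\<^sub>F m in sequentially. word_entropy f \<le> ln (real (card (R_blocks f m))) / real m"
    using eventually_ge_at_top[of 1] by eventually_elim (rule word_entropy_le_R_blocks[OF fin])
  have "ln (real (card (R_blocks f m))) \<le> ln (real (card (factors f m)))" for m
    using card_mono[OF finite_factors[OF fin] R_blocks_subset_factors, of m]
      card_R_blocks_pos[OF fin, of m] by simp
  then show "\<forall>\<^sub>F m in sequentially.
      ln (real (card (R_blocks f m))) / real m \<le> ln (real (card (factors f m))) / real m"
    by (intro always_eventually allI divide_right_mono) auto
qed

section \<open>Cover numbers of joins\<close>

lemma cover_number_le:
  "W \<subseteq> U \<Longrightarrow> finite W \<Longrightarrow> \<Union>W = topspace T \<Longrightarrow> cover_number T U \<le> card W"
  unfolding cover_number_def by (rule cInf_lower) auto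

lemma cover_number_attained:
  assumes "\<exists>W\<subseteq>U. finite W \<and> \<Union>W = topspace T"
  obtains W where "W \<subseteq> U" "finite W" "\<Union>W = topspace T" "card W = cover_number T U"
proof -
  have "{card W | W. W \<subseteq> U \<and> finite W \<and> \<Union>W = topspace T} \<noteq> {}" using assms by blast
  from Inf_nat_def1[OF this] show ?thesis
    using that unfolding cover_number_def by auto
qed

lemma cover_number_pos:
  assumes "\<exists>W\<subseteq>U. finite W \<and> \<Union>W = topspace T" and "topspace T \<noteq> {}"
  shows "cover_number T U \<ge> 1"
proof -
  obtain W where "W \<subseteq> U" "finite W" "\<Union>W = topspace T" "card W = cover_number T U"
    by (rule cover_number_attained[OF assms(1)])
  moreover from assms(2) \<open>\<Union>W = topspace T\<close> have "W \<noteq> {}" by (metis Union_empty)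
  ultimately show ?thesis by (metis One_nat_def Suc_leI card_gt_0_iff)
qed

lemma cover_number_le_refinement:
  assumes "finite C" "\<Union>C = topspace T" "\<Union>U \<subseteq> topspace T"
    and "\<And>c. c \<in> C \<Longrightarrow> \<exists>u\<in>U. c \<subseteq> u"
  shows "cover_number T U \<le> card C"
proof -
  obtain up where up: "\<And>c. c \<in> C \<Longrightarrow> up c \<in> U \<and> c \<subseteq> up c"
    using assms(4) by metis
  have "cover_number T U \<le> card (up ` C)"
    using assms(1-3) up by (intro cover_number_le) blast+
  also have "\<dots> \<le> card C" using assms(1) by (rule card_image_le)
  finally show ?thesis .
qed

lemma join_cover_eq:
  "join_cover T g U n = {{x \<in> topspace T. \<forall>i<n. (g ^^ i) x \<in> c i} | c. \<forall>i<n. c i \<in> U}"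
  unfolding join_cover_def by blast

lemma funpow_in_topspace:
  "g ` topspace T \<subseteq> topspace T \<Longrightarrow> x \<in> topspace T \<Longrightarrow> (g ^^ m) x \<in> topspace T"
  by (induction m) auto

lemma continuous_map_funpow: "continuous_map T T g \<Longrightarrow> continuous_map T T (g ^^ n)"
  by (induction n) (auto intro: continuous_map_compose)

lemma join_cover_in_open_covers:
  assumes g: "continuous_map T T g" and U: "U \<in> open_covers T"
  shows "join_cover T g U n \<in> open_covers T"
proof -
  have open_U: "\<And>u. u \<in> U \<Longrightarrow> openin T u" and cover_U: "\<Union>U = topspace T"
    using U by (auto simp: open_covers_def)
  have "openin T {x \<in> topspace T. \<forall>i<n. (g ^^ i) x \<in> c i}" if c: "\<forall>i<n. c i \<in> U" for c
  proof -
    have "openin T ((\<Inter>i<n. {x \<in> topspace T. (g ^^ i) x \<in> c i}) \<inter> topspace T)"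
      using c open_U continuous_map_funpow[OF g]
      by (intro openin_INT openin_continuous_map_preimage) auto
    moreover have "(\<Inter>i<n. {x \<in> topspace T. (g ^^ i) x \<in> c i}) \<inter> topspace T
        = {x \<in> topspace T. \<forall>i<n. (g ^^ i) x \<in> c i}" by blast
    ultimately show ?thesis by simp
  qed
  moreover have "x \<in> \<Union>(join_cover T g U n)" if x: "x \<in> topspace T" for x
  proof -
    have "\<exists>u\<in>U. (g ^^ i) x \<in> u" for i
      using cover_U continuous_map_funpow[OF g, of i] x by (auto simp: continuous_map_def)
    then obtain c where "\<And>i. c i \<in> U \<and> (g ^^ i) x \<in> c i" by metis
    then have "x \<in> {x \<in> topspace T. \<forall>i<n. (g ^^ i) x \<in> c i}"
      and "{x \<in> topspace T. \<forall>i<n. (g ^^ i) x \<in> c i} \<in> join_cover T g U n"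
      using x unfolding join_cover_eq by auto
    then show ?thesis by blast
  qed
  moreover have "\<Union>(join_cover T g U n) \<subseteq> topspace T"
    unfolding join_cover_def by blast
  ultimately show ?thesis
    unfolding open_covers_def by (auto simp: join_cover_eq)
qed

lemma join_cover_has_finite_subcover:
  assumes "compact_space T" "continuous_map T T g" "U \<in> open_covers T"
  shows "\<exists>W\<subseteq>join_cover T g U n. finite W \<and> \<Union>W = topspace T"
proof -
  have J: "\<forall>u\<in>join_cover T g U n. openin T u" "\<Union>(join_cover T g U n) = topspace T"
    using join_cover_in_open_covers[OF assms(2,3)] unfolding open_covers_def by auto
  then obtain W where "finite W" "W \<subseteq> join_cover T g U n" "topspace T \<subseteq> \<Union>W"
    using assms(1) unfolding compact_space_alt by (metis order_refl)
  moreover have "\<Union>W \<subseteq> topspace T" using J(2) \<open>W \<subseteq> _\<close> by blast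
  ultimately show ?thesis by blast
qed

lemma join_cover_add:
  assumes g: "g ` topspace T \<subseteq> topspace T"
    and a: "a \<in> join_cover T g U m" and b: "b \<in> join_cover T g U n"
  shows "a \<inter> (g ^^ m) -` b \<in> join_cover T g U (m + n)"
proof -
  obtain c d where c: "\<forall>i<m. c i \<in> U" "a = {x \<in> topspace T. \<forall>i<m. (g ^^ i) x \<in> c i}"
    and d: "\<forall>i<n. d i \<in> U" "b = {x \<in> topspace T. \<forall>i<n. (g ^^ i) x \<in> d i}"
    using a b unfolding join_cover_eq by blast
  define e where "e i = (if i < m then c i else d (i - m))" for i
  have split: "(\<forall>i<m + n. P i) \<longleftrightarrow> (\<forall>i<m. P i) \<and> (\<forall>i<n. P (m + i))" for P
    by (auto, metis add_diff_inverse_nat add_less_cancel_left)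
  have "a \<inter> (g ^^ m) -` b = {x \<in> topspace T. \<forall>i<m + n. (g ^^ i) x \<in> e i}"
    using funpow_in_topspace[OF g] unfolding c d e_def split
    by (auto simp: funpow_add add.commute[of m])
  moreover have "\<forall>i<m + n. e i \<in> U" using c d unfolding e_def by auto
  ultimately show ?thesis unfolding join_cover_eq by blast
qed

lemma cover_number_join_add_le:
  assumes g: "g ` topspace T \<subseteq> topspace T"
    and fin: "\<And>n. \<exists>W\<subseteq>join_cover T g U n. finite W \<and> \<Union>W = topspace T"
  shows "cover_number T (join_cover T g U (m + n))
    \<le> cover_number T (join_cover T g U m) * cover_number T (join_cover T g U n)"
proof -
  obtain A where A: "A \<subseteq> join_cover T g U m" "finite A" "\<Union>A = topspace T"
      "card A = cover_number T (join_cover T g U m)"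
    using cover_number_attained[OF fin] .
  obtain B where B: "B \<subseteq> join_cover T g U n" "finite B" "\<Union>B = topspace T"
      "card B = cover_number T (join_cover T g U n)"
    using cover_number_attained[OF fin] .
  define W where "W = (\<lambda>(a, b). a \<inter> (g ^^ m) -` b) ` (A \<times> B)"
  have "W \<subseteq> join_cover T g U (m + n)"
  proof
    fix w assume "w \<in> W"
    then obtain a b where "a \<in> A" "b \<in> B" "w = a \<inter> (g ^^ m) -` b"
      unfolding W_def by auto
    then show "w \<in> join_cover T g U (m + n)"
      using A(1) B(1) by (auto intro: join_cover_add[OF g])
  qed
  moreover have "\<Union>W = topspace T"
  proof
    show "\<Union>W \<subseteq> topspace T" using A(3) unfolding W_def by auto
    show "topspace T \<subseteq> \<Union>W"
    proof
      fix x assume x: "x \<in> topspace T"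
      then have "(g ^^ m) x \<in> topspace T" by (rule funpow_in_topspace[OF g])
      then obtain b where "b \<in> B" "(g ^^ m) x \<in> b" using B(3) by blast
      moreover obtain a where "a \<in> A" "x \<in> a" using x A(3) by blast
      ultimately show "x \<in> \<Union>W" unfolding W_def by blast
    qed
  qed
  moreover have "finite W" unfolding W_def using A(2) B(2) by simp
  ultimately have "cover_number T (join_cover T g U (m + n)) \<le> card W"
    by (intro cover_number_le)
  also have "\<dots> \<le> card (A \<times> B)"
    unfolding W_def using A(2) B(2) by (intro card_image_le) simp
  finally show ?thesis using A(4) B(4) by (simp add: card_cartesian_product)
qed

lemma entropy_cover_limit:
  assumes T: "compact_space T" "topspace T \<noteq> {}" and g: "continuous_map T T g"
    and U: "U \<in> open_covers T"
  shows "(\<lambda>n. ln (real (cover_number T (join_cover T g U n))) / real n)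
    \<longlonglongrightarrow> entropy_cover T g U"
proof -
  have fin: "\<exists>W\<subseteq>join_cover T g U n. finite W \<and> \<Union>W = topspace T" for n
    using T(1) g U by (rule join_cover_has_finite_subcover)
  have "g ` topspace T \<subseteq> topspace T" using g by (rule continuous_map_image_subset_topspace)
  then have "(\<lambda>n. ln (real (cover_number T (join_cover T g U n))) / real n)
      \<longlonglongrightarrow> (INF n\<in>{1..}. ln (real (cover_number T (join_cover T g U n))) / real n)"
    using fin cover_number_pos[OF fin T(2)]
    by (intro submultiplicative_ln_limit cover_number_join_add_le)
  then show ?thesis unfolding entropy_cover_def by (simp add: limI)
qed

section \<open>Orbit closure of a finitely-valued sequence\<close>

locale finite_valued_orbit =
  fixes X :: "'a topology" and f :: "nat \<Rightarrow> 'a"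
  assumes compact: "compact_space X" and hausdorff: "Hausdorff_space X"
    and range_subset: "range f \<subseteq> topspace X" and finite_range: "finite (range f)"
begin

abbreviation P :: "(nat \<Rightarrow> 'a) topology" where
  "P \<equiv> product_topology (\<lambda>_. X) UNIV"

abbreviation orbit :: "(nat \<Rightarrow> 'a) set" where
  "orbit \<equiv> {(\<lambda>k. f (n + k)) | n. True}"

definition S :: "(nat \<Rightarrow> 'a) set" where
  "S = P closure_of orbit"

lemma Xf_top_eq: "Xf_top X f = subtopology P S"
  unfolding Xf_top_def S_def ..

lemma topspace_Xf_top: "topspace (Xf_top X f) = S"
  unfolding Xf_top_eq S_def topspace_subtopology
  by (rule Int_absorb1[OF closure_of_subset_topspace])

lemma orbit_subset_S: "orbit \<subseteq> S"
  unfolding S_def using range_subset by (intro closure_of_subset) (auto simp: PiE_iff)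

lemma suffix_in_S: "(\<lambda>k. f (p + k)) \<in> S"
  using orbit_subset_S by blast

lemma S_nonempty: "S \<noteq> {}"
  using suffix_in_S by auto

lemma S_subset: "S \<subseteq> topspace P"
  unfolding S_def by (rule closure_of_subset_topspace)

lemma closedin_subset_range:
  assumes "A \<subseteq> range f" shows "closedin X A"
proof -
  have "finite A" "A \<subseteq> topspace X"
    using assms finite_subset[OF assms finite_range] range_subset by auto
  then show ?thesis
    using Hausdorff_imp_t1_space[OF hausdorff] unfolding t1_space_closedin_finite by simp
qed

lemma S_values: assumes "\<eta> \<in> S" shows "\<eta> i \<in> range f"
proof -
  have "closedin P {\<eta> \<in> topspace P. \<eta> i \<in> range f}"
    using continuous_map_product_projection[of i UNIV "\<lambda>_. X"] closedin_subset_range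
    by (intro closedin_continuous_map_preimage) auto
  moreover have "orbit \<subseteq> {\<eta> \<in> topspace P. \<eta> i \<in> range f}"
    using orbit_subset_S S_subset by auto
  ultimately show ?thesis using assms unfolding S_def by (auto dest: closure_of_minimal)
qed

text \<open>Since range f is finite and closed, each of its points b has an open
  neighbourhood meeting range f only in b; this makes cylinders open.\<close>
definition isolating :: "'a \<Rightarrow> 'a set" where
  "isolating b = topspace X - (range f - {b})"

lemma openin_isolating: "openin X (isolating b)"
  unfolding isolating_def by (intro openin_diff openin_topspace closedin_subset_range) blast

lemma isolating_iff: "x \<in> range f \<Longrightarrow> x \<in> isolating b \<longleftrightarrow> x = b"
  unfolding isolating_def using range_subset by auto

definition box :: "nat \<Rightarrow> (nat \<Rightarrow> 'a) \<Rightarrow> (nat \<Rightarrow> 'a) set" where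
  "box n \<eta> = {\<zeta> \<in> topspace P. \<forall>i<n. \<zeta> i \<in> isolating (\<eta> i)}"

lemma openin_box: "openin P (box n \<eta>)"
proof -
  have "openin P ((\<Inter>i<n. {\<zeta> \<in> topspace P. \<zeta> i \<in> isolating (\<eta> i)}) \<inter> topspace P)"
  proof (intro openin_INT)
    show "openin P {\<zeta> \<in> topspace P. \<zeta> i \<in> isolating (\<eta> i)}" for i
      using continuous_map_product_projection[of i UNIV "\<lambda>_. X"] openin_isolating
      by (intro openin_continuous_map_preimage) auto
  qed simp
  moreover have "(\<Inter>i<n. {\<zeta> \<in> topspace P. \<zeta> i \<in> isolating (\<eta> i)}) \<inter> topspace P = box n \<eta>"
    unfolding box_def by blast
  ultimately show ?thesis by simp
qed

definition cylinder :: "nat \<Rightarrow> (nat \<Rightarrow> 'a) \<Rightarrow> (nat \<Rightarrow> 'a) set" where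
  "cylinder n \<eta> = {\<zeta> \<in> S. \<forall>i<n. \<zeta> i = \<eta> i}"

lemma in_box_iff: "\<zeta> \<in> S \<Longrightarrow> \<zeta> \<in> box n \<eta> \<longleftrightarrow> (\<forall>i<n. \<zeta> i = \<eta> i)"
  unfolding box_def using S_subset isolating_iff[OF S_values] by auto

lemma cylinder_eq_box: "cylinder n \<eta> = S \<inter> box n \<eta>"
  unfolding cylinder_def by (auto simp: in_box_iff)

lemma openin_cylinder: "openin (Xf_top X f) (cylinder n \<eta>)"
  unfolding cylinder_eq_box Xf_top_eq by (intro openin_subtopology_Int2 openin_box)

lemma cylinder_self: "\<eta> \<in> S \<Longrightarrow> \<eta> \<in> cylinder n \<eta>"
  unfolding cylinder_def by simp

lemma cylinder_antimono: "m \<le> n \<Longrightarrow> cylinder n \<eta> \<subseteq> cylinder m \<eta>"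
  unfolding cylinder_def by auto

lemma cylinder_eq: "\<zeta> \<in> cylinder n \<eta> \<Longrightarrow> cylinder n \<zeta> = cylinder n \<eta>"
  unfolding cylinder_def by auto

lemma prefix_in_factors:
  assumes "\<eta> \<in> S" shows "map \<eta> [0..<n] \<in> factors f n"
proof -
  have "\<eta> \<in> box n \<eta>" using assms by (simp add: in_box_iff)
  then obtain p where "(\<lambda>k. f (p + k)) \<in> box n \<eta>"
    using assms openin_box unfolding S_def in_closure_of by blast
  then have "\<forall>i<n. f (p + i) = \<eta> i"
    unfolding box_def using isolating_iff by auto
  then show ?thesis unfolding factors_def by (auto intro!: exI[of _ p])
qed

lemma prefixes_eq_factors: "(\<lambda>\<eta>. map \<eta> [0..<n]) ` S = factors f n"
proof
  show "(\<lambda>\<eta>. map \<eta> [0..<n]) ` S \<subseteq> factors f n" using prefix_in_factors by auto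
  show "factors f n \<subseteq> (\<lambda>\<eta>. map \<eta> [0..<n]) ` S"
    using orbit_subset_S unfolding factors_def by blast
qed

lemma cylinders_eq: "(\<lambda>\<eta>. cylinder n \<eta>) ` S = (\<lambda>w. {\<zeta> \<in> S. map \<zeta> [0..<n] = w}) ` factors f n"
  unfolding prefixes_eq_factors[symmetric] image_image cylinder_def by (intro image_cong) auto

lemma finite_cylinders: "finite ((\<lambda>\<eta>. cylinder n \<eta>) ` S)"
  unfolding cylinders_eq using finite_factors[OF finite_range] by simp

lemma card_cylinders_le: "card ((\<lambda>\<eta>. cylinder n \<eta>) ` S) \<le> card (factors f n)"
  unfolding cylinders_eq using finite_factors[OF finite_range] by (rule card_image_le)

lemma continuous_map_shift_product: "continuous_map P P shift"
  unfolding shift_def continuous_map_componentwise_UNIV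
  by (intro allI continuous_map_product_projection) simp

lemma shift_maps_S: "shift ` S \<subseteq> S"
proof -
  have "shift ` S \<subseteq> P closure_of (shift ` orbit)"
    unfolding S_def using continuous_map_shift_product by (rule continuous_map_image_closure_subset)
  also have "\<dots> \<subseteq> S"
  proof -
    have "shift (\<lambda>k. f (n + k)) = (\<lambda>k. f (Suc n + k))" for n by (simp add: shift_def)
    then have "shift ` orbit \<subseteq> orbit" by fastforce
    then show ?thesis unfolding S_def by (rule closure_of_mono)
  qed
  finally show ?thesis .
qed

lemma continuous_map_shift: "continuous_map (Xf_top X f) (Xf_top X f) shift"
  unfolding Xf_top_eq using shift_maps_S S_subset continuous_map_shift_product
  by (auto simp: continuous_map_in_subtopology intro: continuous_map_from_subtopology)

lemma funpow_shift: "(shift ^^ i) \<eta> j = \<eta> (i + j)"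
  by (induction i arbitrary: j) (auto simp: shift_def)

lemma funpow_shift_in_S: "\<eta> \<in> S \<Longrightarrow> (shift ^^ i) \<eta> \<in> S"
  using shift_maps_S by (induction i) auto

lemma compact_Xf_top: "compact_space (Xf_top X f)"
proof -
  have "compact_space P" using compact by (simp add: compact_space_product_topology)
  then show ?thesis
    unfolding Xf_top_eq S_def by (intro compact_space_subtopology closedin_compact_space) auto
qed

lemma cylinder_subset_open:
  assumes "openin (Xf_top X f) u" "\<eta> \<in> u"
  obtains K where "cylinder K \<eta> \<subseteq> u"
proof -
  obtain W where W: "openin P W" "u = W \<inter> S"
    using assms(1) unfolding Xf_top_eq openin_subtopology by auto
  with assms(2) obtain B where B: "finite {i \<in> UNIV. B i \<noteq> topspace X}"
      "\<eta> \<in> Pi\<^sub>E UNIV B" "Pi\<^sub>E UNIV B \<subseteq> W"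
    unfolding openin_product_topology_alt by blast
  obtain K where K: "{i \<in> UNIV. B i \<noteq> topspace X} \<subseteq> {..<K}"
    using B(1) unfolding finite_nat_iff_bounded ..
  have "\<zeta> \<in> Pi\<^sub>E UNIV B" if \<zeta>: "\<zeta> \<in> cylinder K \<eta>" for \<zeta>
  proof -
    have "\<zeta> i \<in> B i" for i
    proof (cases "i < K")
      case True then show ?thesis using \<zeta> B(2) unfolding cylinder_def by auto
    next
      case False
      then have "B i = topspace X" using K by auto
      then show ?thesis using \<zeta> S_subset unfolding cylinder_def by auto
    qed
    then show ?thesis by auto
  qed
  then have "cylinder K \<eta> \<subseteq> u" using B(3) W(2) unfolding cylinder_def by blast
  then show ?thesis by (rule that)
qed

text \<open>Lebesgue number lemma for cylinders: the sets of points whose K-cylinder lies in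
  a member of U form an increasing open cover of the compact space, so one of them is
  already everything.\<close>
lemma cylinder_Lebesgue_number:
  assumes U: "U \<in> open_covers (Xf_top X f)"
  obtains k where "\<And>\<eta>. \<eta> \<in> S \<Longrightarrow> \<exists>u\<in>U. cylinder k \<eta> \<subseteq> u"
proof -
  have U_open: "\<And>u. u \<in> U \<Longrightarrow> openin (Xf_top X f) u" and U_cover: "\<Union>U = S"
    using U unfolding open_covers_def topspace_Xf_top by auto
  define A where "A K = {\<eta> \<in> S. \<exists>u\<in>U. cylinder K \<eta> \<subseteq> u}" for K
  have "openin (Xf_top X f) (A K)" for K
  proof (subst openin_subopen, intro ballI)
    fix \<eta> assume "\<eta> \<in> A K"
    have "cylinder K \<eta> \<subseteq> A K"
    proof
      fix \<zeta> assume "\<zeta> \<in> cylinder K \<eta>"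
      then have "\<zeta> \<in> S" "cylinder K \<zeta> = cylinder K \<eta>"
        using cylinder_eq unfolding cylinder_def by auto
      then show "\<zeta> \<in> A K" using \<open>\<eta> \<in> A K\<close> unfolding A_def by simp
    qed
    moreover have "\<eta> \<in> cylinder K \<eta>"
      using \<open>\<eta> \<in> A K\<close> cylinder_self unfolding A_def by simp
    ultimately show "\<exists>T. openin (Xf_top X f) T \<and> \<eta> \<in> T \<and> T \<subseteq> A K"
      using openin_cylinder by blast
  qed
  moreover have "S \<subseteq> \<Union>(range A)"
  proof
    fix \<eta> assume "\<eta> \<in> S"
    then obtain u where "u \<in> U" "\<eta> \<in> u" using U_cover by blast
    moreover obtain K where "cylinder K \<eta> \<subseteq> u"
      by (rule cylinder_subset_open[OF U_open[OF \<open>u \<in> U\<close>] \<open>\<eta> \<in> u\<close>])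
    ultimately have "\<eta> \<in> A K" using \<open>\<eta> \<in> S\<close> unfolding A_def by blast
    then show "\<eta> \<in> \<Union>(range A)" by blast
  qed
  ultimately obtain F where F: "finite F" "F \<subseteq> range A" "S \<subseteq> \<Union>F"
    using compact_space_alt[THEN iffD1, OF compact_Xf_top, rule_format, of "range A"]
    unfolding topspace_Xf_top by blast
  then obtain I where I: "finite I" "F = A ` I" using finite_subset_image by metis
  have "S \<subseteq> A (Max (insert 0 I))"
  proof
    fix \<eta> assume "\<eta> \<in> S"
    then obtain K where "K \<in> I" "\<eta> \<in> A K" using F(3) I(2) by blast
    moreover have "cylinder (Max (insert 0 I)) \<eta> \<subseteq> cylinder K \<eta>"
      using I(1) \<open>K \<in> I\<close> by (intro cylinder_antimono) simp
    ultimately show "\<eta> \<in> A (Max (insert 0 I))" unfolding A_def by blast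
  qed
  then show ?thesis unfolding A_def by (intro that) blast
qed

lemma cylinder_subset_join_cover:
  assumes k: "\<And>\<eta>. \<eta> \<in> S \<Longrightarrow> \<exists>u\<in>U. cylinder k \<eta> \<subseteq> u" and "\<eta> \<in> S"
  shows "\<exists>v\<in>join_cover (Xf_top X f) shift U n. cylinder (n + k) \<eta> \<subseteq> v"
proof -
  have "\<forall>i. \<exists>u\<in>U. cylinder k ((shift ^^ i) \<eta>) \<subseteq> u"
    using k funpow_shift_in_S[OF \<open>\<eta> \<in> S\<close>] by blast
  then obtain u where u: "\<And>i. u i \<in> U \<and> cylinder k ((shift ^^ i) \<eta>) \<subseteq> u i"
    by metis
  have "cylinder (n + k) \<eta> \<subseteq> {\<zeta> \<in> S. \<forall>i<n. (shift ^^ i) \<zeta> \<in> u i}"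
  proof
    fix \<zeta> assume "\<zeta> \<in> cylinder (n + k) \<eta>"
    then have "\<zeta> \<in> S" "\<forall>j<n + k. \<zeta> j = \<eta> j" unfolding cylinder_def by auto
    then have "(shift ^^ i) \<zeta> \<in> cylinder k ((shift ^^ i) \<eta>)" if "i < n" for i
      using that funpow_shift_in_S unfolding cylinder_def by (auto simp: funpow_shift)
    then show "\<zeta> \<in> {\<zeta> \<in> S. \<forall>i<n. (shift ^^ i) \<zeta> \<in> u i}"
      using u \<open>\<zeta> \<in> S\<close> by blast
  qed
  moreover have "{\<zeta> \<in> S. \<forall>i<n. (shift ^^ i) \<zeta> \<in> u i} \<in> join_cover (Xf_top X f) shift U n"
    unfolding join_cover_eq topspace_Xf_top using u by blast
  ultimately show ?thesis by blast
qed

lemma cover_number_join_le_factors: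
  assumes U: "U \<in> open_covers (Xf_top X f)"
  obtains k where
    "\<And>n. cover_number (Xf_top X f) (join_cover (Xf_top X f) shift U n) \<le> card (factors f (n + k))"
proof -
  obtain k where k: "\<And>\<eta>. \<eta> \<in> S \<Longrightarrow> \<exists>u\<in>U. cylinder k \<eta> \<subseteq> u"
    using cylinder_Lebesgue_number[OF U] by blast
  have "cover_number (Xf_top X f) (join_cover (Xf_top X f) shift U n)
      \<le> card ((\<lambda>\<eta>. cylinder (n + k) \<eta>) ` S)" for n
  proof (rule cover_number_le_refinement)
    show "finite ((\<lambda>\<eta>. cylinder (n + k) \<eta>) ` S)" by (rule finite_cylinders)
    show "\<Union>((\<lambda>\<eta>. cylinder (n + k) \<eta>) ` S) = topspace (Xf_top X f)"
      using cylinder_self unfolding topspace_Xf_top cylinder_def by blast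
    show "\<Union>(join_cover (Xf_top X f) shift U n) \<subseteq> topspace (Xf_top X f)"
      unfolding join_cover_def by blast
  qed (use cylinder_subset_join_cover[OF k] in blast)
  then show ?thesis using card_cylinders_le le_trans that by blast
qed

lemma join_cover_has_finite_subcover_Xf:
  "U \<in> open_covers (Xf_top X f) \<Longrightarrow>
    \<exists>W\<subseteq>join_cover (Xf_top X f) shift U n. finite W \<and> \<Union>W = topspace (Xf_top X f)"
  by (rule join_cover_has_finite_subcover[OF compact_Xf_top continuous_map_shift])

lemma entropy_cover_limit_Xf:
  "U \<in> open_covers (Xf_top X f) \<Longrightarrow>
    (\<lambda>n. ln (real (cover_number (Xf_top X f) (join_cover (Xf_top X f) shift U n))) / real n)
      \<longlonglongrightarrow> entropy_cover (Xf_top X f) shift U"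
  using S_nonempty unfolding topspace_Xf_top[symmetric]
  by (rule entropy_cover_limit[OF compact_Xf_top _ continuous_map_shift])

lemma entropy_cover_le_word_entropy:
  assumes U: "U \<in> open_covers (Xf_top X f)"
  shows "entropy_cover (Xf_top X f) shift U \<le> word_entropy f"
proof -
  obtain k where k: "\<And>n. cover_number (Xf_top X f) (join_cover (Xf_top X f) shift U n)
      \<le> card (factors f (n + k))"
    using cover_number_join_le_factors[OF U] by blast
  have "ln (real (cover_number (Xf_top X f) (join_cover (Xf_top X f) shift U n))) / real n
      \<le> ln (real (card (factors f (n + k)))) / real n" for n
  proof -
    have "1 \<le> cover_number (Xf_top X f) (join_cover (Xf_top X f) shift U n)"
      using S_nonempty unfolding topspace_Xf_top[symmetric]
      by (rule cover_number_pos[OF join_cover_has_finite_subcover_Xf[OF U]])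
    then show ?thesis using k[of n] by (intro divide_right_mono) auto
  qed
  then show ?thesis
    by (intro tendsto_le[OF _ LIMSEQ_shift_over_n[OF word_entropy_limit[OF finite_range]]
          entropy_cover_limit_Xf[OF U]] always_eventually) auto
qed

definition first_symbol_cover :: "(nat \<Rightarrow> 'a) set set" where
  "first_symbol_cover = (\<lambda>\<eta>. cylinder 1 \<eta>) ` S"

lemma first_symbol_cover_in_open_covers: "first_symbol_cover \<in> open_covers (Xf_top X f)"
proof -
  have "\<Union>first_symbol_cover = S"
    unfolding first_symbol_cover_def using cylinder_self by (auto simp: cylinder_def)
  then show ?thesis
    unfolding open_covers_def topspace_Xf_top using openin_cylinder
    by (auto simp: first_symbol_cover_def)
qed

lemma join_first_symbol_cover_agree:
  assumes "e \<in> join_cover (Xf_top X f) shift first_symbol_cover n"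
    and "\<zeta> \<in> e" "\<zeta>' \<in> e" "i < n"
  shows "\<zeta> i = \<zeta>' i"
proof -
  obtain c where c: "\<forall>i<n. c i \<in> first_symbol_cover"
    "e = {\<zeta> \<in> S. \<forall>i<n. (shift ^^ i) \<zeta> \<in> c i}"
    using assms(1) unfolding join_cover_eq topspace_Xf_top by blast
  then obtain \<eta> where "c i = cylinder 1 \<eta>"
    using assms(4) unfolding first_symbol_cover_def by blast
  then have "(shift ^^ i) \<zeta> 0 = \<eta> 0" "(shift ^^ i) \<zeta>' 0 = \<eta> 0"
    using assms(2-4) c(2) unfolding cylinder_def by auto
  then show ?thesis by (simp add: funpow_shift)
qed

text \<open>Each member of a subcover of the n-th join determines the first n symbols of
  its points, so a subcover needs at least as many members as there are factors.\<close>
lemma card_factors_le_cover_number: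
  "card (factors f n) \<le> cover_number (Xf_top X f) (join_cover (Xf_top X f) shift first_symbol_cover n)"
proof -
  obtain W where W: "W \<subseteq> join_cover (Xf_top X f) shift first_symbol_cover n" "finite W"
      "\<Union>W = topspace (Xf_top X f)"
      "card W = cover_number (Xf_top X f) (join_cover (Xf_top X f) shift first_symbol_cover n)"
    by (rule cover_number_attained[OF join_cover_has_finite_subcover_Xf[OF
          first_symbol_cover_in_open_covers]])
  let ?prefix = "\<lambda>\<eta>. map \<eta> [0..<n]"
  have single: "card (?prefix ` e) \<le> 1" if e: "e \<in> W" for e
  proof -
    have "e \<subseteq> S" using W(3) e unfolding topspace_Xf_top by blast
    then have "?prefix ` e \<subseteq> factors f n"
      unfolding prefixes_eq_factors[symmetric] by (rule image_mono)
    then have "finite (?prefix ` e)"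
      using finite_factors[OF finite_range] by (rule finite_subset)
    moreover have "?prefix \<zeta> = ?prefix \<zeta>'" if "\<zeta> \<in> e" "\<zeta>' \<in> e" for \<zeta> \<zeta>'
    proof (rule map_cong[OF refl])
      fix i assume "i \<in> set [0..<n]"
      then show "\<zeta> i = \<zeta>' i"
        using join_first_symbol_cover_agree[OF subsetD[OF W(1) e] that] by simp
    qed
    ultimately have "card (?prefix ` e) \<le> Suc 0" by (subst card_le_Suc0_iff_eq) blast+
    then show ?thesis by simp
  qed
  have "factors f n = (\<Union>e\<in>W. ?prefix ` e)"
    unfolding prefixes_eq_factors[symmetric] topspace_Xf_top[symmetric] W(3)[symmetric]
    by (rule image_Union)
  then have "card (factors f n) \<le> (\<Sum>e\<in>W. card (?prefix ` e))"
    using card_UN_le[OF W(2)] by simp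
  also have "\<dots> \<le> (\<Sum>e\<in>W. 1)" using single by (rule sum_mono)
  finally show ?thesis using W(4) by simp
qed

lemma word_entropy_le_entropy_cover:
  "word_entropy f \<le> entropy_cover (Xf_top X f) shift first_symbol_cover"
proof -
  have "ln (real (card (factors f n))) / real n
      \<le> ln (real (cover_number (Xf_top X f) (join_cover (Xf_top X f) shift first_symbol_cover n)))
        / real n" for n
    using card_factors_le_cover_number[of n] card_factors_pos[OF finite_range, of n]
    by (intro divide_right_mono) auto
  then show ?thesis
    by (intro tendsto_le[OF _ entropy_cover_limit_Xf[OF first_symbol_cover_in_open_covers]
          word_entropy_limit[OF finite_range]] always_eventually) auto
qed

lemma anqie_entropy_eq_word_entropy: "anqie_entropy X f = ereal (word_entropy f)"
  unfolding anqie_entropy_def top_entropy_def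
proof (rule antisym)
  show "(SUP U\<in>open_covers (Xf_top X f). ereal (entropy_cover (Xf_top X f) shift U))
      \<le> ereal (word_entropy f)"
    by (rule SUP_least) (simp add: entropy_cover_le_word_entropy)
  show "ereal (word_entropy f)
      \<le> (SUP U\<in>open_covers (Xf_top X f). ereal (entropy_cover (Xf_top X f) shift U))"
    by (rule SUP_upper2[OF first_symbol_cover_in_open_covers])
      (simp add: word_entropy_le_entropy_cover)
qed

end

theorem lemma6p2:
  fixes X :: "'a topology" and f :: "nat \<Rightarrow> 'a"
  assumes "compact_space X" and "Hausdorff_space X"
    and "range f \<subseteq> topspace X" and "finite (range f)"
  shows "\<exists>L. (\<lambda>m. ln (real (card (R_blocks f m))) / real m) \<longlonglongrightarrow> L
             \<and> anqie_entropy X f = ereal L"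
proof -
  interpret finite_valued_orbit X f using assms by unfold_locales
  show ?thesis
    using R_blocks_limit[OF finite_range] anqie_entropy_eq_word_entropy by blast
qed

end
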